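(* Let $K\ge 1$ be an integer, $T\ge 1$, and $\eta\in(0,1/2]$. Let $f^1,\dots,f^T$ be classifiers (e.g. the iterates produced by the worst-class adversarial training algorithm described in the context), and for each $k\in\{0,1,\dots,K\}$ and $t\in\{1,\dots,T\}$ let $L^{val}_k(f^t)\in[0,1]$. Define the weights $$w^{t}_{k}=\frac{\exp\left(\sum_{i=1}^{t-1}\eta\, L^{val}_{k}(f^i)\right)}{\sum_{j=0}^{K}\exp\left(\sum_{i=1}^{t-1}\eta\, L^{val}_{j}(f^i)\right)},\qquad k=0,\dots,K,\ t=1,\dots,T$$ (so $w^1_k=1/(K+1)$). Assume that for every $k\in\{0,\dots,K\}$, $$\frac{1}{T}\sum_{t=1}^{T}L^{val}_{k}(f^{t})\ \ge\ \frac{1}{1-\eta}\min_{1\le t\le T}L^{val}_{k}(f^{t}).$$ Then $$\max_{0\le k\le K}\ \min_{1\le t\le T}L^{val}_{k}(f^{t})\ \le\ \frac{1}{T}\sum_{t=1}^{T}\sum_{k=0}^{K}w^{t}_{k}\,L^{val}_{k}(f^{t})+\frac{\log(K+1)}{T\eta}.$$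
   Context: Setting: $K$-class classification with labels $\{1,\dots,K\}$. For a classifier $f$, $L^{val}_0(f)$ denotes its average loss on a validation set and $L^{val}_k(f)$ ($1\le k\le K$) its average loss on the validation examples of class $k$ (the loss used is the TRADES adversarial loss). The worst-class adversarial training algorithm initializes $f^0$ and, for $t=1,\dots,T$, sets $f^t=f^{t-1}-\lambda\sum_{k=0}^K w^t_k\,\partial L^{tr}_k(f^{t-1})/\partial f$, where $L^{tr}_0$ is the overall training loss and $L^{tr}_k$ the class-$k$ training loss, $\lambda>0$ a learning rate, and $w^t_k$ are the exponential (Hedge) weights given in the claim, computed from past validation losses. *)

theory Defs
  imports Complex_Main
begin

text \<open>L k t stands for the validation loss L^val_k(f^t) of the t-th iterate on
class k (k = 0 is the overall loss). Hedge weights w^t_k.\<close>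

definition hedge_weight :: "real \<Rightarrow> nat \<Rightarrow> (nat \<Rightarrow> nat \<Rightarrow> real) \<Rightarrow> nat \<Rightarrow> nat \<Rightarrow> real" where
  "hedge_weight \<eta> K L t k =
     exp (\<Sum>i=1..<t. \<eta> * L k i) / (\<Sum>j=0..K. exp (\<Sum>i=1..<t. \<eta> * L j i))"

end

theory Submission
  imports Defs
begin

text \<open>This is the regret bound of the Hedge algorithm, run with gains L k t. The potential
  W t = \<Sum>j. exp (\<eta> \<Sum>i<t. L j i) starts at K + 1 and, because exp (\<eta> x) \<le> 1 + (\<eta> + \<eta>^2) x on
  [0,1], grows per round by at most the factor exp ((\<eta> + \<eta>^2) g t), where g t is the
  hedge-weighted loss. As W (T+1) dominates each of its summands, taking logarithms gives
  \<eta> \<Sum>t. L k t \<le> ln (K + 1) + (\<eta> + \<eta>^2) \<Sum>t. g t for every class k. The hypothesis bounds the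
  minimum over t by (1 - \<eta>) times the average, and (1 - \<eta>)(1 + \<eta>) \<le> 1 absorbs the quadratic
  term.\<close>

lemma exp_mult_le_linear:
  fixes \<eta> x :: real
  assumes "0 \<le> \<eta>" "\<eta> \<le> 1" "0 \<le> x" "x \<le> 1"
  shows "exp (\<eta> * x) \<le> 1 + (\<eta> + \<eta>\<^sup>2) * x"
proof -
  have "exp (\<eta> * x) \<le> 1 + \<eta> * x + (\<eta> * x)\<^sup>2"
    using assms by (intro exp_bound) (auto intro: mult_le_one)
  also have "(\<eta> * x)\<^sup>2 = \<eta>\<^sup>2 * (x * x)"
    by (simp add: power_mult_distrib power2_eq_square)
  also have "\<dots> \<le> \<eta>\<^sup>2 * x"
    using assms by (intro mult_left_mono) (auto simp: mult_left_le_one_le)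
  finally show ?thesis
    by (simp add: algebra_simps)
qed

lemma one_minus_mult_le_of_mult_le:
  fixes \<eta> a G S :: real
  assumes "0 < \<eta>" "\<eta> \<le> 1" "0 \<le> a" "0 \<le> G"
    and "\<eta> * S \<le> a + (\<eta> + \<eta>\<^sup>2) * G"
  shows "(1 - \<eta>) * S \<le> a / \<eta> + G"
proof -
  have "(1 - \<eta>) * S = (1 - \<eta>) / \<eta> * (\<eta> * S)"
    using assms(1) by (simp add: field_simps)
  also have "\<dots> \<le> (1 - \<eta>) / \<eta> * (a + (\<eta> + \<eta>\<^sup>2) * G)"
    using assms by (intro mult_left_mono) auto
  also have "\<dots> = (1 - \<eta>) * a / \<eta> + (1 - \<eta>\<^sup>2) * G"
    using assms(1) by (simp add: field_simps power2_eq_square)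
  also have "\<dots> \<le> a / \<eta> + G"
    using assms by (intro add_mono divide_right_mono mult_left_le_one_le) (auto simp: power_le_one)
  finally show ?thesis .
qed

definition hedge_potential :: "real \<Rightarrow> nat \<Rightarrow> (nat \<Rightarrow> nat \<Rightarrow> real) \<Rightarrow> nat \<Rightarrow> real" where
  "hedge_potential \<eta> K L t = (\<Sum>j=0..K. exp (\<Sum>i=1..<t. \<eta> * L j i))"

definition hedge_loss :: "real \<Rightarrow> nat \<Rightarrow> (nat \<Rightarrow> nat \<Rightarrow> real) \<Rightarrow> nat \<Rightarrow> real" where
  "hedge_loss \<eta> K L t = (\<Sum>k=0..K. hedge_weight \<eta> K L t k * L k t)"

lemma hedge_potential_pos: "0 < hedge_potential \<eta> K L t"
  unfolding hedge_potential_def by (intro sum_pos) auto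

lemma hedge_weight_eq:
  "hedge_weight \<eta> K L t k = exp (\<Sum>i=1..<t. \<eta> * L k i) / hedge_potential \<eta> K L t"
  by (simp add: hedge_weight_def hedge_potential_def)

lemma hedge_loss_nonneg:
  assumes "\<And>k. k \<le> K \<Longrightarrow> 0 \<le> L k t"
  shows "0 \<le> hedge_loss \<eta> K L t"
  unfolding hedge_loss_def hedge_weight_eq
  using assms hedge_potential_pos by (intro sum_nonneg divide_nonneg_pos mult_nonneg_nonneg) auto

lemma hedge_potential_Suc_le:
  assumes "0 \<le> \<eta>" "\<eta> \<le> 1" "1 \<le> t"
    and range: "\<And>k. k \<le> K \<Longrightarrow> L k t \<in> {0..1}"
  shows "hedge_potential \<eta> K L (Suc t)
    \<le> hedge_potential \<eta> K L t * exp ((\<eta> + \<eta>\<^sup>2) * hedge_loss \<eta> K L t)"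
proof -
  define E where "E k = exp (\<Sum>i=1..<t. \<eta> * L k i)" for k
  define W where "W = hedge_potential \<eta> K L t"
  have W_pos: "0 < W"
    unfolding W_def by (rule hedge_potential_pos)
  have "hedge_potential \<eta> K L (Suc t) = (\<Sum>k=0..K. E k * exp (\<eta> * L k t))"
    using \<open>1 \<le> t\<close> by (simp add: hedge_potential_def E_def sum.atLeastLessThan_Suc exp_add)
  also have "\<dots> \<le> (\<Sum>k=0..K. E k * (1 + (\<eta> + \<eta>\<^sup>2) * L k t))"
    using assms by (intro sum_mono mult_left_mono exp_mult_le_linear) (auto simp: E_def)
  also have "\<dots> = W + (\<eta> + \<eta>\<^sup>2) * (\<Sum>k=0..K. E k * L k t)"
    by (simp add: W_def hedge_potential_def E_def algebra_simps sum.distrib sum_distrib_left)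
  also have "(\<Sum>k=0..K. E k * L k t) = W * hedge_loss \<eta> K L t"
    using W_pos by (simp add: hedge_loss_def hedge_weight_eq E_def W_def sum_distrib_left)
  also have "W + (\<eta> + \<eta>\<^sup>2) * (W * hedge_loss \<eta> K L t)
      = W * (1 + (\<eta> + \<eta>\<^sup>2) * hedge_loss \<eta> K L t)"
    by (simp add: algebra_simps)
  also have "\<dots> \<le> W * exp ((\<eta> + \<eta>\<^sup>2) * hedge_loss \<eta> K L t)"
    using W_pos by (intro mult_left_mono) auto
  finally show ?thesis
    by (simp add: W_def)
qed

lemma hedge_potential_le:
  assumes "0 \<le> \<eta>" "\<eta> \<le> 1"
    and range: "\<And>k t. k \<le> K \<Longrightarrow> 1 \<le> t \<Longrightarrow> t \<le> n \<Longrightarrow> L k t \<in> {0..1}"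
  shows "hedge_potential \<eta> K L (Suc n)
    \<le> (real K + 1) * exp ((\<eta> + \<eta>\<^sup>2) * (\<Sum>t=1..n. hedge_loss \<eta> K L t))"
  using range
proof (induction n)
  case 0
  then show ?case by (simp add: hedge_potential_def)
next
  case (Suc n)
  let ?c = "\<eta> + \<eta>\<^sup>2"
  have "hedge_potential \<eta> K L (Suc (Suc n))
      \<le> hedge_potential \<eta> K L (Suc n) * exp (?c * hedge_loss \<eta> K L (Suc n))"
    using assms Suc.prems by (intro hedge_potential_Suc_le) auto
  also have "\<dots> \<le> (real K + 1) * exp (?c * (\<Sum>t=1..n. hedge_loss \<eta> K L t))
      * exp (?c * hedge_loss \<eta> K L (Suc n))"
    using Suc by (intro mult_right_mono) auto
  also have "\<dots> = (real K + 1) * exp (?c * (\<Sum>t=1..Suc n. hedge_loss \<eta> K L t))"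
    by (simp add: algebra_simps exp_add[symmetric])
  finally show ?case .
qed

lemma hedge_regret:
  assumes "0 \<le> \<eta>" "\<eta> \<le> 1" "k \<le> K"
    and range: "\<And>k t. k \<le> K \<Longrightarrow> 1 \<le> t \<Longrightarrow> t \<le> n \<Longrightarrow> L k t \<in> {0..1}"
  shows "\<eta> * (\<Sum>t=1..n. L k t)
    \<le> ln (real K + 1) + (\<eta> + \<eta>\<^sup>2) * (\<Sum>t=1..n. hedge_loss \<eta> K L t)"
proof -
  have "exp (\<eta> * (\<Sum>t=1..n. L k t)) = exp (\<Sum>i=1..<Suc n. \<eta> * L k i)"
    by (simp add: sum_distrib_left atLeastLessThanSuc_atLeastAtMost)
  also have "\<dots> \<le> hedge_potential \<eta> K L (Suc n)"
    unfolding hedge_potential_def using \<open>k \<le> K\<close>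
    by (intro member_le_sum) (auto intro: less_imp_le)
  also have "\<dots> \<le> (real K + 1) * exp ((\<eta> + \<eta>\<^sup>2) * (\<Sum>t=1..n. hedge_loss \<eta> K L t))"
    using assms by (intro hedge_potential_le) auto
  also have "\<dots> = exp (ln (real K + 1) + (\<eta> + \<eta>\<^sup>2) * (\<Sum>t=1..n. hedge_loss \<eta> K L t))"
    by (simp add: exp_add)
  finally show ?thesis
    by simp
qed

theorem theorem1:
  fixes K T :: nat and \<eta> :: real and L :: "nat \<Rightarrow> nat \<Rightarrow> real"
  assumes K: "K \<ge> 1" and T: "T \<ge> 1"
    and eta: "0 < \<eta>" "\<eta> \<le> 1/2"
    and range: "\<And>k t. k \<le> K \<Longrightarrow> 1 \<le> t \<Longrightarrow> t \<le> T \<Longrightarrow> L k t \<in> {0..1}"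
    and hyp: "\<And>k. k \<le> K \<Longrightarrow>
       (1 / real T) * (\<Sum>t=1..T. L k t) \<ge> (1 / (1 - \<eta>)) * (MIN t\<in>{1..T}. L k t)"
  shows "(MAX k\<in>{0..K}. MIN t\<in>{1..T}. L k t)
     \<le> (1 / real T) * (\<Sum>t=1..T. \<Sum>k=0..K. hedge_weight \<eta> K L t k * L k t)
       + ln (real K + 1) / (real T * \<eta>)"
proof -
  define G where "G = (\<Sum>t=1..T. hedge_loss \<eta> K L t)"
  have "0 \<le> G"
    unfolding G_def using range by (intro sum_nonneg hedge_loss_nonneg) auto
  have "(MIN t\<in>{1..T}. L k t) \<le> G / real T + ln (real K + 1) / (real T * \<eta>)"
    if "k \<le> K" for k
  proof -
    have "(MIN t\<in>{1..T}. L k t) \<le> (1 - \<eta>) * (\<Sum>t=1..T. L k t) / real T"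
      using hyp[OF that] eta T by (simp add: field_simps)
    also have "\<dots> \<le> (ln (real K + 1) / \<eta> + G) / real T"
    proof (intro divide_right_mono one_minus_mult_le_of_mult_le)
      show "\<eta> * (\<Sum>t=1..T. L k t) \<le> ln (real K + 1) + (\<eta> + \<eta>\<^sup>2) * G"
        unfolding G_def using eta that range by (intro hedge_regret) auto
    qed (use eta \<open>0 \<le> G\<close> in auto)
    finally show ?thesis
      by (simp add: add_divide_distrib mult.commute)
  qed
  then show ?thesis
    by (simp add: G_def hedge_loss_def Max_le_iff)
qed

end
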